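(* Let $\mathbb{K}$ be a field of characteristic zero, let $p,q\in\mathbb{Z}^n_{\ge0}$ be nonzero vectors and let $\beta,\gamma\in\mathbb{K}^n$ be non-proportional vectors such that the derivations $\Delta^p_\beta$ and $\Delta^q_\gamma$ of $\mathbb{K}[x_1,\ldots,x_n]$ generate a finite dimensional Lie algebra. Let $r$ and $s$ be the smallest non-negative integers such that $\langle\beta,rp+q\rangle=0$ and $\langle\gamma,p+sq\rangle=0$. Then $r=0$ or $s=0$.
   Context: For $p\in\mathbb{Z}^n_{\ge0}$ and $\beta\in\mathbb{K}^n$, $\Delta^p_\beta:=x_1^{p_1}\cdots x_n^{p_n}\sum_{j=1}^n\beta_jx_j\partial_j$, where $\partial_j=\partial/\partial x_j$. $\langle\beta,u\rangle:=\sum_i\beta_iu_i$. The Lie bracket is the commutator of derivations. *)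

theory Defs
  imports "HOL-Library.Poly_Mapping"
begin

text \<open>Polynomials in the variables x_j, j ranging over the finite type 'n (so n = CARD('n)),
  with coefficients in 'a: finitely supported maps from exponent vectors to coefficients.\<close>
type_synonym ('n, 'a) mpoly = "('n \<Rightarrow>\<^sub>0 nat) \<Rightarrow>\<^sub>0 'a"

definition pair :: "('n::finite \<Rightarrow> 'a::field) \<Rightarrow> ('n \<Rightarrow> nat) \<Rightarrow> 'a" where
  "pair \<beta> u = (\<Sum>j\<in>UNIV. \<beta> j * of_nat (u j))"

text \<open>Delta^p_beta = x^p * sum_j beta_j x_j d/dx_j. On a monomial x^v the Euler-type operator
  sum_j beta_j x_j d_j acts by multiplication with the pairing of beta and v.\<close>
definition Delta :: "('n::finite \<Rightarrow> nat) \<Rightarrow> ('n \<Rightarrow> 'a::field) \<Rightarrow> ('n,'a) mpoly \<Rightarrow> ('n,'a) mpoly" where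
  "Delta p \<beta> f =
     Poly_Mapping.single (Abs_poly_mapping p) 1
       * Poly_Mapping.mapp (\<lambda>v c. pair \<beta> (Poly_Mapping.lookup v) * c) f"

definition op_scale :: "'a::field \<Rightarrow> (('n,'a) mpoly \<Rightarrow> ('n,'a) mpoly) \<Rightarrow> ('n,'a) mpoly \<Rightarrow> ('n,'a) mpoly" where
  "op_scale c D = (\<lambda>f. Poly_Mapping.map (\<lambda>a. c * a) (D f))"

definition lie_bracket :: "(('n,'a::field) mpoly \<Rightarrow> ('n,'a) mpoly) \<Rightarrow> (('n,'a) mpoly \<Rightarrow> ('n,'a) mpoly) \<Rightarrow> ('n,'a) mpoly \<Rightarrow> ('n,'a) mpoly" where
  "lie_bracket D E = (\<lambda>f. D (E f) - E (D f))"

inductive_set lie_gen :: "(('n,'a::field) mpoly \<Rightarrow> ('n,'a) mpoly) set \<Rightarrow> (('n,'a) mpoly \<Rightarrow> ('n,'a) mpoly) set"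
  for S where
  gen: "D \<in> S \<Longrightarrow> D \<in> lie_gen S"
| zero: "(\<lambda>f. 0) \<in> lie_gen S"
| add: "D \<in> lie_gen S \<Longrightarrow> E \<in> lie_gen S \<Longrightarrow> (\<lambda>f. D f + E f) \<in> lie_gen S"
| scale: "D \<in> lie_gen S \<Longrightarrow> op_scale c D \<in> lie_gen S"
| bracket: "D \<in> lie_gen S \<Longrightarrow> E \<in> lie_gen S \<Longrightarrow> lie_bracket D E \<in> lie_gen S"

definition fin_dim_ops :: "(('n,'a::field) mpoly \<Rightarrow> ('n,'a) mpoly) set \<Rightarrow> bool" where
  "fin_dim_ops L \<longleftrightarrow> (\<exists>B. finite B \<and> (\<forall>D\<in>L. \<exists>c. D = (\<lambda>f. \<Sum>b\<in>B. op_scale (c b) b f)))"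

definition proportional :: "('n \<Rightarrow> 'a::field) \<Rightarrow> ('n \<Rightarrow> 'a) \<Rightarrow> bool" where
  "proportional \<beta> \<gamma> \<longleftrightarrow> (\<exists>c. \<beta> = (\<lambda>j. c * \<gamma> j)) \<or> (\<exists>c. \<gamma> = (\<lambda>j. c * \<beta> j))"

end

theory Submission
  imports Defs
begin

text \<open>Suppose r, s > 0 and put u = r p + q. Bracketing r times with Delta^p_beta turns
  Delta^q_gamma into A = Delta^u_delta with delta in the span of beta and gamma. As
  <beta, u> = 0, the iterated brackets of A with Delta^p_beta are Delta^(p + m u)_(c_m beta) with
  c_m the product of the <delta, p + i u>, i < m. Tracking the coefficients of delta gives
  s <delta, p + m u> = a <gamma, p> ((r + 1) s + m (r s - 1)) with a <> 0, so no c_m vanishes.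
  Applied to x_j with beta_j <> 0, these operators produce the infinitely many monomials
  x^(p + m u) x_j, which a finite dimensional space of operators cannot do.\<close>

lemma pair_add: "pair \<delta> (\<lambda>j. x j + y j) = pair \<delta> x + pair \<delta> y"
  by (simp add: pair_def sum.distrib distrib_left)

lemma pair_mult_add: "pair \<delta> (\<lambda>j. k * x j + y j) = of_nat k * pair \<delta> x + pair \<delta> y"
  by (simp add: pair_def sum.distrib distrib_left sum_distrib_left mult_ac)

lemma pair_add_mult: "pair \<delta> (\<lambda>j. x j + k * y j) = pair \<delta> x + of_nat k * pair \<delta> y"
  by (simp add: pair_def sum.distrib distrib_left sum_distrib_left mult_ac)

lemma pair_lincomb: "pair (\<lambda>j. a * \<gamma> j + b * \<beta> j) w = a * pair \<gamma> w + b * pair \<beta> w"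
  by (simp add: pair_def sum.distrib sum_distrib_left algebra_simps)

lemma pair_diff: "pair (\<lambda>j. \<delta> j - \<epsilon> j) w = pair \<delta> w - pair \<epsilon> w"
  by (simp add: pair_def sum_subtractf algebra_simps)

lemma pair_scale: "pair (\<lambda>j. a * \<beta> j) w = a * pair \<beta> w"
  by (simp add: pair_def sum_distrib_left mult_ac)

lemma pair_single: "pair \<beta> (Poly_Mapping.lookup (Poly_Mapping.single i 1)) = \<beta> i"
proof -
  have "pair \<beta> (Poly_Mapping.lookup (Poly_Mapping.single i 1)) = (\<Sum>j\<in>UNIV. if j = i then \<beta> j else 0)"
    unfolding pair_def by (intro sum.cong) (auto simp: lookup_single when_def)
  then show ?thesis by simp
qed

lemma Abs_poly_mapping_add:
  "Abs_poly_mapping (\<lambda>j. u j + w j) = Abs_poly_mapping u + Abs_poly_mapping (w :: 'n::finite \<Rightarrow> nat)"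
  by (rule poly_mapping_eqI) (simp add: lookup_add)

lemma lookup_Delta_shift:
  fixes \<delta> :: "'n::finite \<Rightarrow> 'a::field"
  shows "Poly_Mapping.lookup (Delta u \<delta> f) (Abs_poly_mapping u + y)
     = pair \<delta> (Poly_Mapping.lookup y) * Poly_Mapping.lookup f y"
proof -
  have "Poly_Mapping.lookup (Poly_Mapping.single (Abs_poly_mapping u) 1 * g) (Abs_poly_mapping u + y)
      = Poly_Mapping.lookup g y" for g :: "('n, 'a) mpoly"
    by (simp add: lookup_mult lookup_single when_mult)
  then show ?thesis
    unfolding Delta_def by (simp add: lookup_mapp when_def in_keys_iff)
qed

lemma lookup_Delta_outside:
  "(\<And>y. k \<noteq> Abs_poly_mapping u + y) \<Longrightarrow> Poly_Mapping.lookup (Delta u \<delta> f) k = 0"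
  unfolding Delta_def by (simp add: lookup_mult lookup_single when_mult)

lemma lie_bracket_Delta:
  fixes u w :: "'n::finite \<Rightarrow> nat" and \<delta> \<epsilon> :: "'n \<Rightarrow> 'a::field"
  shows "lie_bracket (Delta u \<delta>) (Delta w \<epsilon>) =
     Delta (\<lambda>j. u j + w j) (\<lambda>j. pair \<delta> w * \<epsilon> j - pair \<epsilon> u * \<delta> j)"
proof (intro ext poly_mapping_eqI)
  fix f k
  let ?U = "Abs_poly_mapping u" and ?W = "Abs_poly_mapping w"
  let ?lhs = "Poly_Mapping.lookup (lie_bracket (Delta u \<delta>) (Delta w \<epsilon>) f) k"
  let ?D = "Delta (\<lambda>j. u j + w j) (\<lambda>j. pair \<delta> w * \<epsilon> j - pair \<epsilon> u * \<delta> j)"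
  show "?lhs = Poly_Mapping.lookup (?D f) k"
  proof (cases "\<exists>y. k = ?U + ?W + y")
    case True
    then obtain y where k: "k = ?U + (?W + y)" "k = ?W + (?U + y)" "k = ?U + ?W + y"
      by (auto simp: ac_simps)
    have shift: "Poly_Mapping.lookup (Abs_poly_mapping v + y) = (\<lambda>j. v j + Poly_Mapping.lookup y j)"
      for v :: "'n \<Rightarrow> nat"
      by (simp add: lookup_add fun_eq_iff)
    have "Poly_Mapping.lookup (Delta u \<delta> (Delta w \<epsilon> f)) k
        = pair \<delta> (\<lambda>j. w j + Poly_Mapping.lookup y j) * (pair \<epsilon> (Poly_Mapping.lookup y) * Poly_Mapping.lookup f y)"
      unfolding k(1) lookup_Delta_shift shift ..
    moreover have "Poly_Mapping.lookup (Delta w \<epsilon> (Delta u \<delta> f)) k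
        = pair \<epsilon> (\<lambda>j. u j + Poly_Mapping.lookup y j) * (pair \<delta> (Poly_Mapping.lookup y) * Poly_Mapping.lookup f y)"
      unfolding k(2) lookup_Delta_shift shift ..
    ultimately have "?lhs = pair \<delta> (\<lambda>j. w j + Poly_Mapping.lookup y j) * (pair \<epsilon> (Poly_Mapping.lookup y) * Poly_Mapping.lookup f y)
        - pair \<epsilon> (\<lambda>j. u j + Poly_Mapping.lookup y j) * (pair \<delta> (Poly_Mapping.lookup y) * Poly_Mapping.lookup f y)"
      unfolding lie_bracket_def lookup_minus by simp
    also have "\<dots> = Poly_Mapping.lookup (?D f) k"
      unfolding k(3) Abs_poly_mapping_add[symmetric] lookup_Delta_shift pair_diff pair_scale pair_add
      by (simp add: algebra_simps)
    finally show ?thesis .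
  next
    case False
    have "Poly_Mapping.lookup (Delta v \<eta> (Delta v' \<eta>' f)) k = 0"
      if "?U + ?W = Abs_poly_mapping v + Abs_poly_mapping v'" for v v' \<eta> \<eta>'
    proof (cases "\<exists>z. k = Abs_poly_mapping v + z")
      case True
      then obtain z where z: "k = Abs_poly_mapping v + z" by blast
      with False that have "z \<noteq> Abs_poly_mapping v' + y" for y by (auto simp: ac_simps)
      then show ?thesis unfolding z lookup_Delta_shift by (simp add: lookup_Delta_outside)
    qed (auto intro: lookup_Delta_outside)
    moreover have "Poly_Mapping.lookup (?D f) k = 0"
      using False by (intro lookup_Delta_outside) (simp add: Abs_poly_mapping_add)
    ultimately show ?thesis unfolding lie_bracket_def lookup_minus by (simp add: add.commute)
  qed
qed

lemma lie_gen_funpow_lie_bracket: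
  assumes "D \<in> lie_gen S" and "E \<in> lie_gen S"
  shows "(lie_bracket D ^^ k) E \<in> lie_gen S"
  by (induction k) (simp_all add: assms lie_gen.bracket)

lemma funpow_lie_bracket_Delta:
  fixes p q :: "'n::finite \<Rightarrow> nat" and \<beta> \<gamma> :: "'n \<Rightarrow> 'a::field"
  defines "l \<equiv> \<lambda>i. pair \<beta> (\<lambda>j. i * p j + q j)"
  shows "\<exists>b. (lie_bracket (Delta p \<beta>) ^^ k) (Delta q \<gamma>)
          = Delta (\<lambda>j. k * p j + q j) (\<lambda>j. (\<Prod>i<k. l i) * \<gamma> j + b * \<beta> j)
        \<and> (\<Prod>i<k. l i) * pair \<gamma> p + b * pair \<beta> p = pair \<gamma> p * (\<Prod>i<k. l i - pair \<beta> p)"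
proof (induction k)
  case 0
  show ?case by (intro exI[of _ 0]) simp
next
  case (Suc k)
  then obtain b where D: "(lie_bracket (Delta p \<beta>) ^^ k) (Delta q \<gamma>)
          = Delta (\<lambda>j. k * p j + q j) (\<lambda>j. (\<Prod>i<k. l i) * \<gamma> j + b * \<beta> j)"
    and P: "(\<Prod>i<k. l i) * pair \<gamma> p + b * pair \<beta> p = pair \<gamma> p * (\<Prod>i<k. l i - pair \<beta> p)"
    by blast
  define \<pi> where "\<pi> = (\<Prod>i<k. l i) * pair \<gamma> p + b * pair \<beta> p"
  have "(lie_bracket (Delta p \<beta>) ^^ Suc k) (Delta q \<gamma>)
      = Delta (\<lambda>j. Suc k * p j + q j) (\<lambda>j. (\<Prod>i<Suc k. l i) * \<gamma> j + (l k * b - \<pi>) * \<beta> j)"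
    unfolding funpow.simps o_apply D lie_bracket_Delta pair_lincomb
    by (intro arg_cong2[where f = Delta] ext) (simp_all add: l_def \<pi>_def algebra_simps)
  moreover have "(\<Prod>i<Suc k. l i) * pair \<gamma> p + (l k * b - \<pi>) * pair \<beta> p = \<pi> * (l k - pair \<beta> p)"
    by (simp add: \<pi>_def algebra_simps)
  moreover have "\<pi> = pair \<gamma> p * (\<Prod>i<k. l i - pair \<beta> p)"
    using P by (simp add: \<pi>_def)
  ultimately show ?case by (auto simp: mult.assoc)
qed

lemma funpow_lie_bracket_Delta_orthogonal:
  assumes "pair \<epsilon> u = 0"
  shows "(lie_bracket (Delta u \<delta>) ^^ m) (Delta w \<epsilon>)
    = Delta (\<lambda>j. w j + m * u j) (\<lambda>j. (\<Prod>i<m. pair \<delta> (\<lambda>j. w j + i * u j)) * \<epsilon> j)"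
proof (induction m)
  case 0
  show ?case by simp
next
  case (Suc m)
  show ?case
    unfolding funpow.simps o_apply Suc lie_bracket_Delta pair_scale assms
    by (intro arg_cong2[where f = Delta] ext) (simp_all add: algebra_simps)
qed

lemma prod_lessThan_affine: "(\<Prod>i<n. (a + of_nat i) * t) = pochhammer a n * t ^ n"
  by (simp add: pochhammer_prod atLeast0LessThan prod.distrib)

lemma pochhammer_minus_of_nat_minus_one:
  "pochhammer (- of_nat n - 1 :: 'a::comm_ring_1) n = (of_nat n + 1) * pochhammer (- of_nat n) n"
proof -
  have "pochhammer (- of_nat n - 1 :: 'a) (Suc n) = (- of_nat n - 1) * pochhammer (- of_nat n) n"
    by (simp add: pochhammer_rec)
  moreover have "pochhammer (- of_nat n - 1 :: 'a) (Suc n) = - pochhammer (- of_nat n - 1) n"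
    by (simp add: pochhammer_Suc)
  ultimately show ?thesis by (simp add: algebra_simps)
qed

lemma funpow_lie_bracket_Delta_root:
  fixes p q :: "'n::finite \<Rightarrow> nat" and \<beta> \<gamma> :: "'n \<Rightarrow> 'a::field"
  assumes root: "pair \<beta> (\<lambda>j. r * p j + q j) = 0"
    and min: "\<forall>r'<r. pair \<beta> (\<lambda>j. r' * p j + q j) \<noteq> 0"
  obtains a \<delta> where "(lie_bracket (Delta p \<beta>) ^^ r) (Delta q \<gamma>) = Delta (\<lambda>j. r * p j + q j) \<delta>"
    and "a \<noteq> 0" and "pair \<delta> p = (of_nat r + 1) * a * pair \<gamma> p"
    and "pair \<delta> (\<lambda>j. r * p j + q j) = a * pair \<gamma> (\<lambda>j. r * p j + q j)"
proof -
  define t where "t = pair \<beta> p"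
  define l where "l = (\<lambda>i::nat. pair \<beta> (\<lambda>j. i * p j + q j))"
  define a where "a = (\<Prod>i<r. l i)"
  obtain b where D: "(lie_bracket (Delta p \<beta>) ^^ r) (Delta q \<gamma>)
          = Delta (\<lambda>j. r * p j + q j) (\<lambda>j. a * \<gamma> j + b * \<beta> j)"
    and P: "a * pair \<gamma> p + b * t = pair \<gamma> p * (\<Prod>i<r. l i - t)"
    using funpow_lie_bracket_Delta[where k = r] unfolding a_def l_def t_def by blast
  have "of_nat r * t + pair \<beta> q = 0"
    using root unfolding pair_mult_add t_def .
  then have l: "l i = (- of_nat r + of_nat i) * t" for i
    unfolding l_def pair_mult_add t_def[symmetric] by (simp add: algebra_simps add_eq_0_iff)
  \<comment> \<open>Both products are Pochhammer symbols at -r, which yields the factor r + 1.\<close>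
  have "(\<Prod>i<r. l i - t) = pochhammer (- of_nat r - 1) r * t ^ r"
    unfolding l prod_lessThan_affine[symmetric] by (simp add: algebra_simps)
  also have "\<dots> = (of_nat r + 1) * a"
    unfolding pochhammer_minus_of_nat_minus_one a_def l prod_lessThan_affine by simp
  finally have "a * pair \<gamma> p + b * t = (of_nat r + 1) * a * pair \<gamma> p"
    using P by simp
  moreover have "a \<noteq> 0"
    using min unfolding a_def l_def by simp
  ultimately show thesis
    using that[OF D] root unfolding pair_lincomb t_def by simp
qed

lemma of_nat_combination_nonzero:
  fixes g e :: "'a::field_char_0"
  assumes "g + of_nat s * e = 0" and "g \<noteq> 0" and "r > 0" and "s > 0"
  shows "(of_nat r + 1) * g + of_nat m * (of_nat r * g + e) \<noteq> 0"
proof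
  assume zero: "(of_nat r + 1) * g + of_nat m * (of_nat r * g + e) = 0"
  obtain k where k: "r * s = Suc k"
    using assms(3,4) by (metis gr0_implies_Suc nat_0_less_mult_iff)
  have "of_nat s * ((of_nat r + 1) * g + of_nat m * (of_nat r * g + e))
      = of_nat s * (of_nat r + 1) * g + of_nat m * (of_nat (r * s)) * g + of_nat m * (g + of_nat s * e) - of_nat m * g"
    by (simp add: algebra_simps)
  also have "\<dots> = of_nat ((r + 1) * s + m * k) * g"
    unfolding k assms(1) by (simp add: algebra_simps)
  finally have "of_nat s * ((of_nat r + 1) * g + of_nat m * (of_nat r * g + e))
      = of_nat ((r + 1) * s + m * k) * g" .
  moreover have "(r + 1) * s + m * k \<noteq> 0"
    using assms(4) by simp
  ultimately show False
    using zero assms(2) by (metis mult_eq_0_iff mult_zero_right of_nat_eq_0_iff)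
qed

lemma lookup_op_scale: "Poly_Mapping.lookup (op_scale c D f) k = c * Poly_Mapping.lookup (D f) k"
  by (simp add: op_scale_def map.rep_eq when_def)

lemma fin_dim_ops_finite_keys:
  assumes "fin_dim_ops L"
  shows "finite (\<Union>D\<in>L. Poly_Mapping.keys (D f))"
proof -
  obtain B where "finite B" and span: "\<forall>D\<in>L. \<exists>c. D = (\<lambda>f. \<Sum>b\<in>B. op_scale (c b) b f)"
    using assms unfolding fin_dim_ops_def by blast
  have "Poly_Mapping.keys (D f) \<subseteq> (\<Union>b\<in>B. Poly_Mapping.keys (b f))" if "D \<in> L" for D
  proof
    fix k
    assume k: "k \<in> Poly_Mapping.keys (D f)"
    obtain c where "D = (\<lambda>f. \<Sum>b\<in>B. op_scale (c b) b f)"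
      using span \<open>D \<in> L\<close> by blast
    then have "(\<Sum>b\<in>B. c b * Poly_Mapping.lookup (b f) k) \<noteq> 0"
      using k by (simp add: lookup_sum lookup_op_scale in_keys_iff)
    then obtain b where "b \<in> B" and "c b * Poly_Mapping.lookup (b f) k \<noteq> 0"
      by (meson sum.neutral)
    then show "k \<in> (\<Union>b\<in>B. Poly_Mapping.keys (b f))"
      by (auto simp: in_keys_iff)
  qed
  then have "(\<Union>D\<in>L. Poly_Mapping.keys (D f)) \<subseteq> (\<Union>b\<in>B. Poly_Mapping.keys (b f))"
    by blast
  moreover have "finite (\<Union>b\<in>B. Poly_Mapping.keys (b f))"
    using \<open>finite B\<close> by simp
  ultimately show ?thesis
    by (rule finite_subset)
qed

lemma not_fin_dim_ops_Delta_family: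
  fixes w :: "'i \<Rightarrow> 'n::finite \<Rightarrow> nat" and \<epsilon> :: "'i \<Rightarrow> 'n \<Rightarrow> 'a::field"
  assumes "infinite (UNIV :: 'i set)" and "inj w"
    and "\<And>m. Delta (w m) (\<epsilon> m) \<in> L" and "\<And>m. \<epsilon> m j \<noteq> 0"
  shows "\<not> fin_dim_ops L"
proof
  assume "fin_dim_ops L"
  define x :: "('n, 'a) mpoly" where "x = Poly_Mapping.single (Poly_Mapping.single j 1) 1"
  define key where "key m = Abs_poly_mapping (w m) + Poly_Mapping.single j 1" for m
  have "key m \<in> (\<Union>D\<in>L. Poly_Mapping.keys (D x))" for m
  proof -
    have "Poly_Mapping.lookup (Delta (w m) (\<epsilon> m) x) (key m) = \<epsilon> m j"
      unfolding key_def x_def lookup_Delta_shift pair_single by simp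
    then show ?thesis
      by (intro UN_I[OF assms(3)[of m]]) (simp add: in_keys_iff assms(4))
  qed
  moreover have "inj key"
  proof (rule injI)
    fix m m'
    assume "key m = key m'"
    then have "Poly_Mapping.lookup (Abs_poly_mapping (w m)) = Poly_Mapping.lookup (Abs_poly_mapping (w m'))"
      unfolding key_def by simp
    then show "m = m'"
      using assms(2) by (simp add: inj_eq)
  qed
  ultimately have "infinite (\<Union>D\<in>L. Poly_Mapping.keys (D x))"
    using assms(1) by (metis finite_imageD finite_subset image_subsetI)
  with fin_dim_ops_finite_keys[OF \<open>fin_dim_ops L\<close>] show False
    by blast
qed

lemma funpow_lie_bracket_Delta_nonvanishing_ray:
  fixes p q :: "'n::finite \<Rightarrow> nat" and \<beta> \<gamma> :: "'n \<Rightarrow> 'a::field_char_0"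
  assumes "r > 0" and "s > 0"
    and "pair \<beta> (\<lambda>j. r * p j + q j) = 0" and "\<forall>r'<r. pair \<beta> (\<lambda>j. r' * p j + q j) \<noteq> 0"
    and "pair \<gamma> (\<lambda>j. p j + s * q j) = 0" and "\<forall>s'<s. pair \<gamma> (\<lambda>j. p j + s' * q j) \<noteq> 0"
  defines "u \<equiv> \<lambda>j. r * p j + q j"
  obtains \<delta> where "(lie_bracket (Delta p \<beta>) ^^ r) (Delta q \<gamma>) = Delta u \<delta>"
    and "\<And>m. pair \<delta> (\<lambda>j. p j + m * u j) \<noteq> 0"
proof -
  obtain a \<delta> where A: "(lie_bracket (Delta p \<beta>) ^^ r) (Delta q \<gamma>) = Delta u \<delta>" and "a \<noteq> 0"
    and \<delta>_p: "pair \<delta> p = (of_nat r + 1) * a * pair \<gamma> p" and \<delta>_u: "pair \<delta> u = a * pair \<gamma> u"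
    using funpow_lie_bracket_Delta_root[OF assms(3,4)] unfolding u_def by blast
  have "pair \<delta> (\<lambda>j. p j + m * u j)
      = a * ((of_nat r + 1) * pair \<gamma> p + of_nat m * (of_nat r * pair \<gamma> p + pair \<gamma> q))" for m
    unfolding pair_add_mult \<delta>_p \<delta>_u unfolding u_def pair_mult_add by (simp add: algebra_simps)
  moreover have "pair \<gamma> p \<noteq> 0"
    using assms(6) \<open>s > 0\<close> by auto
  ultimately have "pair \<delta> (\<lambda>j. p j + m * u j) \<noteq> 0" for m
    using of_nat_combination_nonzero[OF assms(5)[unfolded pair_add_mult]] \<open>a \<noteq> 0\<close> assms(1,2) by simp
  with A show thesis
    using that by blast
qed

lemma inj_ray:
  assumes "u \<noteq> (\<lambda>_. 0)"
  shows "inj (\<lambda>(m::nat) j. p j + m * u j)"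
proof (rule injI)
  fix m m' :: nat
  assume eq: "(\<lambda>j. p j + m * u j) = (\<lambda>j. p j + m' * u j)"
  obtain i where "u i \<noteq> 0"
    using assms by auto
  with fun_cong[OF eq, of i] show "m = m'"
    by simp
qed

theorem lemma6:
  fixes p q :: "'n::finite \<Rightarrow> nat" and \<beta> \<gamma> :: "'n \<Rightarrow> 'a::field_char_0" and r s :: nat
  assumes "p \<noteq> (\<lambda>_. 0)" and "q \<noteq> (\<lambda>_. 0)"
    and "\<not> proportional \<beta> \<gamma>"
    and "fin_dim_ops (lie_gen {Delta p \<beta>, Delta q \<gamma>})"
    and "pair \<beta> (\<lambda>j. r * p j + q j) = 0" and "\<forall>r'<r. pair \<beta> (\<lambda>j. r' * p j + q j) \<noteq> 0"
    and "pair \<gamma> (\<lambda>j. p j + s * q j) = 0" and "\<forall>s'<s. pair \<gamma> (\<lambda>j. p j + s' * q j) \<noteq> 0"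
  shows "r = 0 \<or> s = 0"
proof (rule ccontr)
  assume "\<not> (r = 0 \<or> s = 0)"
  then have "r > 0" and "s > 0" by auto
  define u where "u = (\<lambda>j. r * p j + q j)"
  define L where "L = lie_gen {Delta p \<beta>, Delta q \<gamma>}"
  obtain \<delta> where A: "(lie_bracket (Delta p \<beta>) ^^ r) (Delta q \<gamma>) = Delta u \<delta>"
    and nonvanishing: "\<And>m. pair \<delta> (\<lambda>j. p j + m * u j) \<noteq> 0"
    using funpow_lie_bracket_Delta_nonvanishing_ray[OF \<open>r > 0\<close> \<open>s > 0\<close> assms(5-8)] unfolding u_def by blast
  define c where "c m = (\<Prod>i<m. pair \<delta> (\<lambda>j. p j + i * u j))" for m
  have "Delta p \<beta> \<in> L" and "Delta q \<gamma> \<in> L"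
    unfolding L_def by (simp_all add: lie_gen.gen)
  then have "(lie_bracket (Delta u \<delta>) ^^ m) (Delta p \<beta>) \<in> L" for m
    unfolding L_def A[symmetric] by (intro lie_gen_funpow_lie_bracket)
  then have "Delta (\<lambda>j. p j + m * u j) (\<lambda>j. c m * \<beta> j) \<in> L" for m
    unfolding funpow_lie_bracket_Delta_orthogonal[OF assms(5)[folded u_def]] c_def .
  moreover obtain j0 where "\<beta> j0 \<noteq> 0"
    using assms(3) unfolding proportional_def by (metis mult_zero_left)
  moreover have "inj (\<lambda>m j. p j + m * u j)"
    using assms(2) by (intro inj_ray) (auto simp: u_def fun_eq_iff)
  ultimately have "\<not> fin_dim_ops L"
    using nonvanishing
    by (intro not_fin_dim_ops_Delta_family[where j = j0 and \<epsilon> = "\<lambda>m j. c m * \<beta> j"]) (auto simp: c_def)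
  with assms(4) show False
    unfolding L_def by blast
qed

end
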